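(* Let $\mathcal B$ be a bimachine realizing a transduction $f$. Then $\mathit{Left}_f(\mathit{Right}_f(\mathcal B))$ and $\mathit{Right}_f(\mathit{Left}_f(\mathcal B))$ are minimal bimachines realizing $f$, and moreover $\mathcal B\sqsubseteq\mathit{Left}_f(\mathit{Right}_f(\mathcal B))$ and $\mathcal B\sqsubseteq\mathit{Right}_f(\mathit{Left}_f(\mathcal B))$.
   Context: Notation: $u^{-1}v$ is the word $v'$ with $uv'=v$; $\bigwedge L$ is the longest common prefix of $L$ ($\bigwedge\emptyset=\varepsilon$). Transductions are partial functions $f:\Sigma^*\to\Sigma^*$. A left automaton is a complete deterministic automaton $\mathcal L$ with initial $l_0$; $[u]_{\mathcal L}$ is the state reached on $u$; $u\sim_{\mathcal L}v$ iff $[u]_{\mathcal L}=[v]_{\mathcal L}$. A right automaton $\mathcal R$ with initial state $r_0$ is backward deterministic and backward complete and reads words from right to left: $[u]_{\mathcal R}$ is the unique $p$ with a run on $u$ from $p$ to $r_0$, $u$ accepted iff $[u]_{\mathcal R}$ final, $u\sim_{\mathcal R}v$ iff $[u]_{\mathcal R}=[v]_{\mathcal R}$. For automata of the same kind, $\mathcal A_1\sqsubseteq\mathcal A_2$ means ${\sim_{\mathcal A_1}}\subseteq{\sim_{\mathcal A_2}}$. A bimachine $\mathcal B=(\mathcal L,\mathcal R,\omega,\lambda,\rho)$: left automaton $\mathcal L$ and right automaton $\mathcal R$ accepting the same language, $\omega:Q_{\mathcal L}\times\Sigma\times Q_{\mathcal R}\to\Sigma^*$, $\lambda$ on final states of $\mathcal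 R$, $\rho$ on final states of $\mathcal L$; it realizes $u=\sigma_1\cdots\sigma_n\mapsto \lambda([u]_{\mathcal R})\prod_{k=1}^n\omega([\sigma_1\cdots\sigma_{k-1}]_{\mathcal L},\sigma_k,[\sigma_{k+1}\cdots\sigma_n]_{\mathcal R})\,\rho([u]_{\mathcal L})$ on the accepted language. $\mathcal B_1\sqsubseteq\mathcal B_2$ iff $\mathcal L_1\sqsubseteq\mathcal L_2$ and $\mathcal R_1\sqsubseteq\mathcal R_2$. A bimachine $\mathcal B$ realizing $f$ is minimal if there is no bimachine $\mathcal B'$ realizing $f$ with $\mathcal B\sqsubseteq\mathcal B'$ and $\mathcal B'\not\sqsubseteq\mathcal B$. Left minimization: for $\mathcal B$ with right automaton $\mathcal R$ realizing $f$, let $\widehat f_{[w]_{\mathcal R}}(u)=\bigwedge\{f(uv)\mid v\sim_{\mathcal R}w,\,uv\in\mathrm{dom}(f)\}$ and $u\sim_Lv$ iff for all $w$, $uw\in\mathrm{dom}f\Leftrightarrow vw\in\mathrm{dom}f$ and, if $uw\in\mathrm{dom}f$, $\widehat f_{[w]_{\mathcal R}}(u)^{-1}f(uw)=\widehat f_{[w]_{\mathcal R}}(v)^{-1}f(vw)$. $\mathit{Left}_f(\mathcal R)$ is the deterministic automaton on $\Sigma^*/{\sim_L}$ with transitions $([u],\sigma,[u\sigma])$, initial $[\varepsilon]$, finals $\{[u]\mid u\in\mathrm{dom}f\}$. $\mathit{Left}_f(\mathcal B)$ is the bimachine $(\mathit{Left}_f(\mathcal R),\mathcal R,\omega',\lambda',\rho')$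 with $\omega'([u]_L,\sigma,[w]_{\mathcal R})=\widehat f_{[\sigma w]_{\mathcal R}}(u)^{-1}\widehat f_{[w]_{\mathcal R}}(u\sigma)$, $\lambda'([w]_{\mathcal R})=\widehat f_{[w]_{\mathcal R}}(\varepsilon)$, $\rho'([u]_L)=\widehat f_{[\varepsilon]_{\mathcal R}}(u)^{-1}f(u)$; it realizes $f$. $\mathit{Right}_f(\mathcal B)$ (with left automaton that of $\mathcal B$ and right automaton $\mathit{Right}_f(\mathcal L)$) is defined symmetrically, by applying the mirror of this construction (to $w\mapsto\overline{f(\overline w)}$, $\overline{x}$ the mirror image of $x$, and the mirrored bimachine, then mirroring back). *)

theory Defs
  imports Main "HOL-Library.Sublist"
begin

definition lquot :: "'a list \<Rightarrow> 'a list \<Rightarrow> 'a list" where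
  "lquot u v = drop (length u) v"   \<comment> \<open>u^{-1} v (meaningful when u is a prefix of v)\<close>

definition lcp_set :: "'a list set \<Rightarrow> 'a list" where
  "lcp_set L = (if L = {} then []
     else (THE p. (\<forall>x\<in>L. prefix p x) \<and> (\<forall>q. (\<forall>x\<in>L. prefix q x) \<longrightarrow> prefix q p)))"

text \<open>Read as a left automaton it runs left-to-right; read as a right automaton,
  trans q \<sigma> is the unique state p with a transition (p,\<sigma>,q) (backward
  deterministic and backward complete), and words are read right-to-left.\<close>

record ('s, 'a) da =
  states :: "'s set"
  trans :: "'s \<Rightarrow> 'a \<Rightarrow> 's"
  init :: 's
  final :: "'s set"

definition da_wf :: "('s, 'a) da \<Rightarrow> bool" where
  "da_wf A \<longleftrightarrow> finite (states A) \<and> init A \<in> states A \<and> final A \<subseteq> states A \<and>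
     (\<forall>q\<in>states A. \<forall>\<sigma>. trans A q \<sigma> \<in> states A)"

definition lstate :: "('s, 'a) da \<Rightarrow> 'a list \<Rightarrow> 's" where
  "lstate A u = foldl (trans A) (init A) u"

definition rstate :: "('s, 'a) da \<Rightarrow> 'a list \<Rightarrow> 's" where
  "rstate A u = foldr (\<lambda>\<sigma> q. trans A q \<sigma>) u (init A)"

definition left_le :: "('s, 'a) da \<Rightarrow> ('t, 'a) da \<Rightarrow> bool" where
  "left_le A1 A2 \<longleftrightarrow> (\<forall>u v. lstate A1 u = lstate A1 v \<longrightarrow> lstate A2 u = lstate A2 v)"

definition right_le :: "('s, 'a) da \<Rightarrow> ('t, 'a) da \<Rightarrow> bool" where
  "right_le A1 A2 \<longleftrightarrow> (\<forall>u v. rstate A1 u = rstate A1 v \<longrightarrow> rstate A2 u = rstate A2 v)"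

record ('l, 'r, 'a) bimachine =
  lft :: "('l, 'a) da"
  rgt :: "('r, 'a) da"
  omega :: "'l \<Rightarrow> 'a \<Rightarrow> 'r \<Rightarrow> 'a list"
  lam :: "'r \<Rightarrow> 'a list"
  rho :: "'l \<Rightarrow> 'a list"

definition is_bimachine :: "('l, 'r, 'a) bimachine \<Rightarrow> bool" where
  "is_bimachine B \<longleftrightarrow> da_wf (lft B) \<and> da_wf (rgt B) \<and>
     (\<forall>u. lstate (lft B) u \<in> final (lft B) \<longleftrightarrow> rstate (rgt B) u \<in> final (rgt B))"

definition bm_run :: "('l, 'r, 'a) bimachine \<Rightarrow> 'a list \<Rightarrow> 'a list option" where
  "bm_run B u = (if lstate (lft B) u \<in> final (lft B) then
      Some (lam B (rstate (rgt B) u)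
        @ concat (map (\<lambda>k. omega B (lstate (lft B) (take k u)) (u ! k)
                                  (rstate (rgt B) (drop (Suc k) u))) [0..<length u])
        @ rho B (lstate (lft B) u))
    else None)"

definition realizes :: "('l, 'r, 'a) bimachine \<Rightarrow> ('a list \<Rightarrow> 'a list option) \<Rightarrow> bool" where
  "realizes B f \<longleftrightarrow> (\<forall>u. bm_run B u = f u)"

definition bm_le :: "('l1, 'r1, 'a) bimachine \<Rightarrow> ('l2, 'r2, 'a) bimachine \<Rightarrow> bool" where
  "bm_le B1 B2 \<longleftrightarrow> left_le (lft B1) (lft B2) \<and> right_le (rgt B1) (rgt B2)"

text \<open>Competitors are taken with
  states in nat (every finite automaton is isomorphic to one with states in nat, and
  the relations compared by the order only depend on the automata up to isomorphism).\<close>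

definition minimal_bm :: "('a list \<Rightarrow> 'a list option) \<Rightarrow> ('l, 'r, 'a) bimachine \<Rightarrow> bool" where
  "minimal_bm f B \<longleftrightarrow> is_bimachine B \<and> realizes B f \<and>
     \<not> (\<exists>B' :: (nat, nat, 'a) bimachine. is_bimachine B' \<and> realizes B' f \<and>
          bm_le B B' \<and> \<not> bm_le B' B)"

definition fhat :: "('a list \<Rightarrow> 'a list option) \<Rightarrow> ('r, 'a) da \<Rightarrow> 'r \<Rightarrow> 'a list \<Rightarrow> 'a list" where
  "fhat f R q u = lcp_set {y. \<exists>v. rstate R v = q \<and> f (u @ v) = Some y}"

definition simL :: "('a list \<Rightarrow> 'a list option) \<Rightarrow> ('r, 'a) da \<Rightarrow> 'a list \<Rightarrow> 'a list \<Rightarrow> bool" where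
  "simL f R u v \<longleftrightarrow> (\<forall>w. (f (u @ w) \<noteq> None \<longleftrightarrow> f (v @ w) \<noteq> None) \<and>
     (\<forall>x y. f (u @ w) = Some x \<longrightarrow> f (v @ w) = Some y \<longrightarrow>
        lquot (fhat f R (rstate R w) u) x = lquot (fhat f R (rstate R w) v) y))"

definition lclass :: "('a list \<Rightarrow> 'a list option) \<Rightarrow> ('r, 'a) da \<Rightarrow> 'a list \<Rightarrow> 'a list set" where
  "lclass f R u = {v. simL f R u v}"

definition rep :: "'a list set \<Rightarrow> 'a list" where
  "rep C = (SOME u. u \<in> C)"

definition left_da :: "('a list \<Rightarrow> 'a list option) \<Rightarrow> ('r, 'a) da \<Rightarrow> ('a list set, 'a) da" where
  "left_da f R = \<lparr> states = range (lclass f R),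
                   trans = (\<lambda>C \<sigma>. lclass f R (rep C @ [\<sigma>])),
                   init = lclass f R [],
                   final = {lclass f R u | u. f u \<noteq> None} \<rparr>"

definition left_bm :: "('a list \<Rightarrow> 'a list option) \<Rightarrow> ('r, 'a) da \<Rightarrow> ('a list set, 'r, 'a) bimachine" where
  "left_bm f R = \<lparr> lft = left_da f R, rgt = R,
     omega = (\<lambda>C \<sigma> q. lquot (fhat f R (trans R q \<sigma>) (rep C)) (fhat f R q (rep C @ [\<sigma>]))),
     lam = (\<lambda>q. fhat f R q []),
     rho = (\<lambda>C. case f (rep C) of None \<Rightarrow> [] | Some y \<Rightarrow> lquot (fhat f R (init R) (rep C)) y) \<rparr>"

definition Left_f :: "('a list \<Rightarrow> 'a list option) \<Rightarrow> ('l, 'r, 'a) bimachine \<Rightarrow> ('a list set, 'r, 'a) bimachine" where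
  "Left_f f B = left_bm f (rgt B)"

definition mirror_f :: "('a list \<Rightarrow> 'a list option) \<Rightarrow> 'a list \<Rightarrow> 'a list option" where
  "mirror_f f w = map_option rev (f (rev w))"

text \<open>Mirror of a bimachine: the right automaton becomes the left one (and vice versa);
  note rstate A u = lstate A (rev u), so the same data serve both readings.\<close>

definition mirror_bm :: "('l, 'r, 'a) bimachine \<Rightarrow> ('r, 'l, 'a) bimachine" where
  "mirror_bm B = \<lparr> lft = rgt B, rgt = lft B,
     omega = (\<lambda>r \<sigma> l. rev (omega B l \<sigma> r)),
     lam = (\<lambda>l. rev (rho B l)),
     rho = (\<lambda>r. rev (lam B r)) \<rparr>"

definition Right_f :: "('a list \<Rightarrow> 'a list option) \<Rightarrow> ('l, 'r, 'a) bimachine \<Rightarrow> ('l, 'a list set, 'a) bimachine" where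
  "Right_f f B = mirror_bm (Left_f (mirror_f f) (mirror_bm B))"

end

theory Submission
  imports Defs
begin

text \<open>For a fixed right automaton R, the output of any bimachine with right automaton finer than
  R on a word u w splits as a part determined by u and the R-class of w, followed by a part
  determined by w and the left state reached on u. Hence two words reaching the same left state
  have the same residual outputs, i.e. they are \<open>\<sim>\<^sub>L\<close>-equivalent: the left automaton of
  \<open>Left\<^sub>f(R)\<close> is the coarsest one compatible with R, and by mirroring \<open>Right\<^sub>f(L)\<close> is the
  coarsest right automaton compatible with L. Minimality of the two composite machines
  follows: a bimachine above one of them has a right automaton finer than the automaton that
  was fed to the last minimization step, so its left automaton is below the minimized one,
  and symmetrically for the right automaton.\<close>

lemma lcp_set_eq_Longest_common_prefix:
  assumes "L \<noteq> {}" shows "lcp_set L = Longest_common_prefix L"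
  unfolding lcp_set_def using assms
  by (simp, intro the_equality)
    (auto intro: prefix_order.antisym Longest_common_prefix_prefix Longest_common_prefix_max_prefix)

lemma lcp_set_image_append:
  assumes "L \<noteq> {}" shows "lcp_set ((@) a ` L) = a @ lcp_set L"
  using assms
proof (induction a)
  case (Cons x a)
  have "(@) (x # a) ` L = (#) x ` ((@) a ` L)" by auto
  with Cons show ?case
    by (simp add: lcp_set_eq_Longest_common_prefix Longest_common_prefix_image_Cons)
qed simp

lemma lcp_set_empty [simp]: "lcp_set {} = []"
  by (simp add: lcp_set_def)

lemma lcp_set_prefix: "x \<in> L \<Longrightarrow> prefix (lcp_set L) x"
  by (metis empty_iff lcp_set_eq_Longest_common_prefix Longest_common_prefix_prefix)

lemma lquot_append_self [simp]: "lquot a (a @ b) = b"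
  by (simp add: lquot_def)

lemma lquot_append: "lquot (a @ b) y = lquot b (lquot a y)"
  by (simp add: lquot_def add.commute)

lemma prefix_append_lquot: "prefix a b \<Longrightarrow> a @ lquot a b = b"
  by (auto simp: prefix_def lquot_def)

lemma lstate_append: "lstate A (u @ v) = foldl (trans A) (lstate A u) v"
  by (simp add: lstate_def)

lemma rstate_append: "rstate A (u @ v) = foldr (\<lambda>\<sigma> q. trans A q \<sigma>) u (rstate A v)"
  by (simp add: rstate_def)

lemma rstate_Cons [simp]: "rstate A (\<sigma> # v) = trans A (rstate A v) \<sigma>"
  by (simp add: rstate_def)

lemma rstate_Nil [simp]: "rstate A [] = init A"
  by (simp add: rstate_def)

lemma rstate_eq_lstate_rev: "rstate A u = lstate A (rev u)"
  by (simp add: rstate_def lstate_def foldr_conv_foldl)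

lemma left_le_iff_right_le: "left_le A B \<longleftrightarrow> right_le A B"
proof
  show "right_le A B" if "left_le A B"
    using that unfolding left_le_def right_le_def rstate_eq_lstate_rev by blast
  show "left_le A B" if R: "right_le A B"
    unfolding left_le_def
  proof (intro allI impI)
    fix u v assume "lstate A u = lstate A v"
    then show "lstate B u = lstate B v"
      using R unfolding right_le_def rstate_eq_lstate_rev by (metis rev_rev_ident)
  qed
qed

lemma lstate_in_states: "da_wf A \<Longrightarrow> lstate A u \<in> states A"
  by (induction u rule: rev_induct) (simp_all add: da_wf_def lstate_def)

lemma left_le_finite_range:
  assumes "left_le A B" and "finite (range (lstate A))"
  shows "finite (range (lstate B))"
proof -
  have "lstate B u = lstate B (SOME v. lstate A v = lstate A u)" for u
    using assms(1) someI[of "\<lambda>v. lstate A v = lstate A u" u] unfolding left_le_def by metis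
  then have "range (lstate B) \<subseteq> (\<lambda>s. lstate B (SOME v. lstate A v = s)) ` range (lstate A)"
    by blast
  with assms(2) show ?thesis by (rule finite_surj)
qed

lemma left_le_refl [simp]: "left_le A A"
  by (simp add: left_le_def)

lemma right_le_refl [simp]: "right_le A A"
  by (simp add: right_le_def)

lemma left_le_trans: "left_le A B \<Longrightarrow> left_le B C \<Longrightarrow> left_le A C"
  unfolding left_le_def by blast

lemma right_le_trans: "right_le A B \<Longrightarrow> right_le B C \<Longrightarrow> right_le A C"
  unfolding right_le_def by blast

definition residual ::
    "('a list \<Rightarrow> 'a list option) \<Rightarrow> ('r, 'a) da \<Rightarrow> 'a list \<Rightarrow> 'a list \<Rightarrow> 'a list option" where
  "residual f R u w = map_option (lquot (fhat f R (rstate R w) u)) (f (u @ w))"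

lemma residual_eq_None_iff [simp]: "residual f R u w = None \<longleftrightarrow> f (u @ w) = None"
  by (simp add: residual_def)

lemma simL_iff_residual_eq: "simL f R u v \<longleftrightarrow> residual f R u = residual f R v"
proof -
  have "(f (u @ w) \<noteq> None \<longleftrightarrow> f (v @ w) \<noteq> None) \<and>
        (\<forall>x y. f (u @ w) = Some x \<longrightarrow> f (v @ w) = Some y \<longrightarrow>
           lquot (fhat f R (rstate R w) u) x = lquot (fhat f R (rstate R w) v) y)
        \<longleftrightarrow> residual f R u w = residual f R v w" for w
    by (cases "f (u @ w)"; cases "f (v @ w)") (simp_all add: residual_def)
  then show ?thesis unfolding simL_def fun_eq_iff by presburger
qed

lemma lclass_eq_iff: "lclass f R u = lclass f R v \<longleftrightarrow> residual f R u = residual f R v"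
  unfolding lclass_def simL_iff_residual_eq by auto

lemma residual_rep_lclass [simp]: "residual f R (rep (lclass f R u)) = residual f R u"
proof -
  have "u \<in> lclass f R u" by (simp add: lclass_def simL_iff_residual_eq)
  then have "rep (lclass f R u) \<in> lclass f R u" unfolding rep_def by (rule someI)
  then show ?thesis by (simp add: lclass_def simL_iff_residual_eq)
qed

lemma fhat_prefix: "f (u @ v) = Some y \<Longrightarrow> prefix (fhat f R (rstate R v) u) y"
  unfolding fhat_def by (rule lcp_set_prefix) auto

definition step_residues ::
    "('a list \<Rightarrow> 'a list option) \<Rightarrow> ('r, 'a) da \<Rightarrow> 'a list \<Rightarrow> 'a \<Rightarrow> 'r \<Rightarrow> 'a list set" where
  "step_residues f R u \<sigma> q = {z. \<exists>v. rstate R v = q \<and> residual f R u (\<sigma> # v) = Some z}"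

lemma fhat_snoc_set:
  "{y. \<exists>v. rstate R v = q \<and> f ((u @ [\<sigma>]) @ v) = Some y}
     = (@) (fhat f R (trans R q \<sigma>) u) ` step_residues f R u \<sigma> q"
proof -
  have "y = fhat f R (trans R q \<sigma>) u @ lquot (fhat f R (trans R q \<sigma>) u) y"
    if "f (u @ \<sigma> # v) = Some y" "rstate R v = q" for v y
    using fhat_prefix[of f u "\<sigma> # v" y R] that by (simp add: prefix_append_lquot)
  then show ?thesis
    by (auto simp: step_residues_def residual_def image_iff)
qed

lemma fhat_snoc:
  assumes "step_residues f R u \<sigma> q \<noteq> {}"
  shows "fhat f R q (u @ [\<sigma>]) = fhat f R (trans R q \<sigma>) u @ lcp_set (step_residues f R u \<sigma> q)"
  using assms unfolding fhat_def[of f R q "u @ [\<sigma>]"] fhat_snoc_set by (rule lcp_set_image_append)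

lemma lquot_fhat_snoc:
  "lquot (fhat f R (trans R q \<sigma>) u) (fhat f R q (u @ [\<sigma>])) = lcp_set (step_residues f R u \<sigma> q)"
proof (cases "step_residues f R u \<sigma> q = {}")
  case True
  then show ?thesis unfolding fhat_def[of f R q "u @ [\<sigma>]"] fhat_snoc_set by (simp add: lquot_def)
qed (simp add: fhat_snoc)

lemma residual_snoc:
  "residual f R (u @ [\<sigma>]) w
     = map_option (lquot (lcp_set (step_residues f R u \<sigma> (rstate R w)))) (residual f R u (\<sigma> # w))"
proof (cases "f (u @ \<sigma> # w)")
  case (Some y)
  then have "step_residues f R u \<sigma> (rstate R w) \<noteq> {}"
    by (auto simp: step_residues_def residual_def)
  with Some show ?thesis by (simp add: residual_def fhat_snoc lquot_append)
qed (simp add: residual_def)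

lemma residual_snoc_cong:
  "residual f R u = residual f R v \<Longrightarrow> residual f R (u @ [\<sigma>]) = residual f R (v @ [\<sigma>])"
  by (simp add: fun_eq_iff residual_snoc step_residues_def)

lemma lstate_left_da: "lstate (left_da f R) u = lclass f R u"
proof (induction u rule: rev_induct)
  case (snoc \<sigma> u)
  have "residual f R (rep (lclass f R u) @ [\<sigma>]) = residual f R (u @ [\<sigma>])"
    by (rule residual_snoc_cong) simp
  with snoc show ?case by (simp add: lstate_append left_da_def lclass_eq_iff)
qed (simp add: lstate_def left_da_def)

text \<open>The output of a bimachine on x @ y, split after x: the first part depends on y only
  through its right state, the second on x only through its left state.\<close>

definition bm_out_prefix :: "('l, 'r, 'a) bimachine \<Rightarrow> 'a list \<Rightarrow> 'a list \<Rightarrow> 'a list" where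
  "bm_out_prefix B x y = lam B (rstate (rgt B) (x @ y)) @
     concat (map (\<lambda>k. omega B (lstate (lft B) (take k x)) (x ! k)
       (rstate (rgt B) (drop (Suc k) x @ y))) [0..<length x])"

definition bm_out_suffix :: "('l, 'r, 'a) bimachine \<Rightarrow> 'l \<Rightarrow> 'a list \<Rightarrow> 'a list" where
  "bm_out_suffix B s y =
     concat (map (\<lambda>k. omega B (foldl (trans (lft B)) s (take k y)) (y ! k)
       (rstate (rgt B) (drop (Suc k) y))) [0..<length y])
     @ rho B (foldl (trans (lft B)) s y)"

lemma concat_map_upt_add:
  "concat (map F [0..<m + n]) = concat (map F [0..<m]) @ concat (map (\<lambda>k. F (m + k)) [0..<n])"
  by (induction n) simp_all

lemma bm_run_append:
  "bm_run B (x @ y) = (if foldl (trans (lft B)) (lstate (lft B) x) y \<in> final (lft B)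
     then Some (bm_out_prefix B x y @ bm_out_suffix B (lstate (lft B) x) y) else None)"
proof -
  let ?F = "\<lambda>k. omega B (lstate (lft B) (take k (x @ y))) ((x @ y) ! k)
                  (rstate (rgt B) (drop (Suc k) (x @ y)))"
  have prefix_part: "map ?F [0..<length x] = map (\<lambda>k. omega B (lstate (lft B) (take k x)) (x ! k)
      (rstate (rgt B) (drop (Suc k) x @ y))) [0..<length x]"
    by (rule map_cong) (auto simp: nth_append)
  have suffix_part: "map (\<lambda>k. ?F (length x + k)) [0..<length y] = map (\<lambda>k. omega B
      (foldl (trans (lft B)) (lstate (lft B) x) (take k y)) (y ! k) (rstate (rgt B) (drop (Suc k) y)))
      [0..<length y]"
    by (rule map_cong) (auto simp: nth_append lstate_append)
  have "concat (map ?F [0..<length (x @ y)])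
      = concat (map ?F [0..<length x]) @ concat (map (\<lambda>k. ?F (length x + k)) [0..<length y])"
    unfolding length_append by (rule concat_map_upt_add)
  then show ?thesis
    unfolding bm_run_def bm_out_prefix_def bm_out_suffix_def lstate_append[of "lft B" x y]
      prefix_part suffix_part by simp
qed

lemma residual_factorization:
  assumes fac: "\<And>u w. f (u @ w) = (if D (s u) w then Some (\<alpha> u w @ \<beta> (s u) w) else None)"
    and cong: "\<And>u w w'. rstate R w = rstate R w' \<Longrightarrow> \<alpha> u w = \<alpha> u w'"
  shows "residual f R u w = (if D (s u) w then
      Some (lquot (lcp_set {\<beta> (s u) v | v. rstate R v = rstate R w \<and> D (s u) v}) (\<beta> (s u) w))
    else None)"
proof (cases "D (s u) w")
  case True
  let ?T = "{\<beta> (s u) v | v. rstate R v = rstate R w \<and> D (s u) v}"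
  have "{y. \<exists>v. rstate R v = rstate R w \<and> f (u @ v) = Some y} = (@) (\<alpha> u w) ` ?T"
  proof (intro equalityI subsetI)
    fix y assume "y \<in> {y. \<exists>v. rstate R v = rstate R w \<and> f (u @ v) = Some y}"
    then obtain v where v: "rstate R v = rstate R w" "f (u @ v) = Some y" by blast
    then have "D (s u) v" "y = \<alpha> u v @ \<beta> (s u) v"
      using fac[of u v] by (simp_all split: if_splits)
    with v(1) show "y \<in> (@) (\<alpha> u w) ` ?T" using cong[where u = u and w = v and w' = w] by blast
  next
    fix y assume "y \<in> (@) (\<alpha> u w) ` ?T"
    then obtain v where v: "y = \<alpha> u w @ \<beta> (s u) v" "rstate R v = rstate R w" "D (s u) v" by blast
    then have "f (u @ v) = Some y" using cong[where u = u and w = v and w' = w] by (simp add: fac)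
    with v(2) show "y \<in> {y. \<exists>v. rstate R v = rstate R w \<and> f (u @ v) = Some y}" by blast
  qed
  moreover have "?T \<noteq> {}" using True by blast
  ultimately have "fhat f R (rstate R w) u = \<alpha> u w @ lcp_set ?T"
    by (simp add: fhat_def lcp_set_image_append)
  with True show ?thesis by (simp add: residual_def fac lquot_append)
qed (simp add: residual_def fac)

lemma left_le_left_da:
  assumes "realizes B f" and "right_le R (rgt B)"
  shows "left_le (lft B) (left_da f R)"
  unfolding left_le_def lstate_left_da lclass_eq_iff
proof (intro allI impI ext)
  fix u v w assume eq: "lstate (lft B) u = lstate (lft B) v"
  have fac: "f (x @ y) = (if foldl (trans (lft B)) (lstate (lft B) x) y \<in> final (lft B)
      then Some (bm_out_prefix B x y @ bm_out_suffix B (lstate (lft B) x) y) else None)" for x y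
    using assms(1) bm_run_append[of B x y] by (simp add: realizes_def)
  have "bm_out_prefix B x y = bm_out_prefix B x y'" if "rstate R y = rstate R y'" for x y y'
  proof -
    have "rstate (rgt B) y = rstate (rgt B) y'" using assms(2) that unfolding right_le_def by blast
    then show ?thesis by (simp add: bm_out_prefix_def rstate_append)
  qed
  note res = residual_factorization[where s = "lstate (lft B)" and \<alpha> = "bm_out_prefix B"
      and \<beta> = "bm_out_suffix B" and D = "\<lambda>s y. foldl (trans (lft B)) s y \<in> final (lft B)", OF fac this]
  show "residual f R u w = residual f R v w"
    by (simp only: res eq)
qed

lemma append_concat_map_telescope:
  assumes "\<And>k. k < n \<Longrightarrow> g (Suc k) = g k @ c k"
  shows "g 0 @ concat (map c [0..<n]) = g n"
  using assms by (induction n) simp_all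

lemma lclass_in_final_left_da_iff: "lclass f R u \<in> final (left_da f R) \<longleftrightarrow> f u \<noteq> None"
proof -
  have "f v \<noteq> None \<Longrightarrow> f u \<noteq> None" if "lclass f R u = lclass f R v" for v
    using that residual_eq_None_iff[of f R u "[]"] residual_eq_None_iff[of f R v "[]"]
    by (simp add: lclass_eq_iff del: not_None_eq)
  then show ?thesis by (simp add: left_da_def) blast
qed

lemma lstate_left_bm_final_iff:
  "lstate (lft (left_bm f R)) u \<in> final (lft (left_bm f R)) \<longleftrightarrow> f u \<noteq> None"
  by (simp add: left_bm_def lstate_left_da lclass_in_final_left_da_iff)

lemma left_bm_realizes: "realizes (left_bm f R) f"
  unfolding realizes_def
proof
  fix u
  let ?M = "left_bm f R"
  show "bm_run ?M u = f u"
  proof (cases "f u")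
    case None
    then show ?thesis by (simp add: bm_run_def lstate_left_bm_final_iff)
  next
    case (Some y)
    \<comment> \<open>The output of the minimized machine up to position k is \<open>g k\<close>; each step appends
      the common prefix \<open>c k\<close> of the residuals.\<close>
    define g where "g k = fhat f R (rstate R (drop k u)) (take k u)" for k
    define c where "c k = lcp_set (step_residues f R (take k u) (u ! k) (rstate R (drop (Suc k) u)))"
      for k
    have omega: "omega ?M (lstate (lft ?M) (take k u)) (u ! k) (rstate R (drop (Suc k) u)) = c k"
      for k
      by (simp add: left_bm_def lstate_left_da lquot_fhat_snoc c_def step_residues_def)
    have step: "g (Suc k) = g k @ c k" if "k < length u" for k
    proof -
      have u: "take k u @ u ! k # drop (Suc k) u = u" using that by (rule id_take_nth_drop[symmetric])
      have "residual f R (take k u) (u ! k # drop (Suc k) u) \<noteq> None" using Some by (simp add: u)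
      then have "step_residues f R (take k u) (u ! k) (rstate R (drop (Suc k) u)) \<noteq> {}"
        unfolding step_residues_def by blast
      moreover have "drop k u = u ! k # drop (Suc k) u" using that by (simp add: Cons_nth_drop_Suc)
      ultimately show ?thesis
        using fhat_snoc that by (simp add: g_def c_def take_Suc_conv_app_nth)
    qed
    have rho: "rho ?M (lstate (lft ?M) u) = lquot (g (length u)) y"
    proof -
      have "residual f R (rep (lclass f R u)) [] = Some (lquot (g (length u)) y)"
        using Some by (simp add: residual_def g_def)
      then obtain z where "f (rep (lclass f R u)) = Some z"
        "lquot (fhat f R (init R) (rep (lclass f R u))) z = lquot (g (length u)) y"
        by (auto simp: residual_def simp del: residual_rep_lclass)
      then show ?thesis by (simp add: left_bm_def lstate_left_da)
    qed
    have "rgt ?M = R" "lam ?M (rstate R u) = g 0" by (simp_all add: left_bm_def g_def)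
    then have "bm_run ?M u = Some (g 0 @ concat (map c [0..<length u]) @ lquot (g (length u)) y)"
      using Some by (simp add: bm_run_def lstate_left_bm_final_iff omega rho)
    also have "\<dots> = Some y"
      using append_concat_map_telescope[of "length u" g c] step fhat_prefix[of f u "[]" y R] Some
      by (simp add: g_def prefix_append_lquot flip: append_assoc)
    finally show ?thesis using Some by simp
  qed
qed

lemma realizes_dom_iff:
  assumes "is_bimachine B" and "realizes B f"
  shows "f u \<noteq> None \<longleftrightarrow> rstate (rgt B) u \<in> final (rgt B)"
proof -
  have "f u = bm_run B u" using assms(2) by (simp add: realizes_def)
  then have "f u \<noteq> None \<longleftrightarrow> lstate (lft B) u \<in> final (lft B)" by (simp add: bm_run_def)
  with assms(1) show ?thesis by (simp add: is_bimachine_def)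
qed

lemma is_bimachine_left_bm:
  assumes "is_bimachine B" and "realizes B f"
  shows "is_bimachine (left_bm f (rgt B))"
proof -
  have "left_le (lft B) (left_da f (rgt B))"
    by (rule left_le_left_da[OF assms(2) right_le_refl])
  moreover have "finite (range (lstate (lft B)))"
    using assms(1) lstate_in_states unfolding is_bimachine_def da_wf_def
    by (blast intro: finite_subset)
  ultimately have "finite (range (lstate (left_da f (rgt B))))" by (rule left_le_finite_range)
  then have "da_wf (left_da f (rgt B))"
    unfolding da_wf_def lstate_left_da by (auto simp: left_da_def)
  moreover have "lstate (lft (left_bm f (rgt B))) u \<in> final (lft (left_bm f (rgt B)))
      \<longleftrightarrow> rstate (rgt (left_bm f (rgt B))) u \<in> final (rgt (left_bm f (rgt B)))" for u
    unfolding lstate_left_bm_final_iff realizes_dom_iff[OF assms] by (simp add: left_bm_def)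
  ultimately show ?thesis
    using assms(1) by (simp add: is_bimachine_def left_bm_def)
qed

lemma rev_upt_zero: "rev [0..<n] = map (\<lambda>k. n - Suc k) [0..<n]"
  by (rule nth_equalityI) (auto simp: rev_nth)

lemma bm_run_mirror_bm:
  assumes "is_bimachine B"
  shows "bm_run (mirror_bm B) u = map_option rev (bm_run B (rev u))"
proof -
  let ?n = "length u"
  let ?G = "\<lambda>k. omega B (lstate (lft B) (take k (rev u))) (rev u ! k)
              (rstate (rgt B) (drop (Suc k) (rev u)))"
  have final: "lstate (rgt B) u \<in> final (rgt B) \<longleftrightarrow> lstate (lft B) (rev u) \<in> final (lft B)"
    using assms unfolding is_bimachine_def by (metis rstate_eq_lstate_rev rev_rev_ident)
  have "rev (concat (map ?G [0..<?n])) = concat (map (\<lambda>k. rev (?G (?n - Suc k))) [0..<?n])"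
    by (simp add: rev_concat rev_map rev_upt_zero comp_def)
  also have "\<dots> = concat (map (\<lambda>k. rev (omega B
      (rstate (lft B) (drop (Suc k) u)) (u ! k) (lstate (rgt B) (take k u)))) [0..<?n])"
    by (rule arg_cong[where f = concat], rule map_cong)
      (auto simp: take_rev rev_nth drop_rev Suc_diff_Suc rstate_eq_lstate_rev)
  finally have "rev (concat (map ?G [0..<length (rev u)])) = \<dots>" by simp
  with final show ?thesis
    by (simp add: bm_run_def mirror_bm_def rstate_eq_lstate_rev)
qed

lemma is_bimachine_mirror_bm: "is_bimachine B \<Longrightarrow> is_bimachine (mirror_bm B)"
  by (simp add: is_bimachine_def mirror_bm_def rstate_eq_lstate_rev)

lemma mirror_f_mirror_f [simp]: "mirror_f (mirror_f f) = f"
  by (simp add: fun_eq_iff mirror_f_def option.map_comp comp_def option.map_ident)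

lemma realizes_mirror_bm:
  "is_bimachine B \<Longrightarrow> realizes B f \<Longrightarrow> realizes (mirror_bm B) (mirror_f f)"
  by (simp add: realizes_def bm_run_mirror_bm mirror_f_def)

lemma right_le_left_da_mirror:
  assumes "is_bimachine B" and "realizes B f" and "left_le L (lft B)"
  shows "right_le (rgt B) (left_da (mirror_f f) L)"
proof -
  have "right_le L (rgt (mirror_bm B))"
    using assms(3) by (simp add: mirror_bm_def left_le_iff_right_le)
  with realizes_mirror_bm[OF assms(1,2)]
  have "left_le (lft (mirror_bm B)) (left_da (mirror_f f) L)" by (rule left_le_left_da)
  then show ?thesis by (simp add: mirror_bm_def left_le_iff_right_le)
qed

lemma lft_Left_f [simp]: "lft (Left_f f B) = left_da f (rgt B)"
  and rgt_Left_f [simp]: "rgt (Left_f f B) = rgt B"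
  and lft_Right_f [simp]: "lft (Right_f f B) = lft B"
  and rgt_Right_f [simp]: "rgt (Right_f f B) = left_da (mirror_f f) (lft B)"
  by (simp_all add: Right_f_def Left_f_def mirror_bm_def left_bm_def)

lemma Left_f_realizes:
  assumes "is_bimachine B" and "realizes B f"
  shows "is_bimachine (Left_f f B)" and "realizes (Left_f f B) f"
  unfolding Left_f_def by (rule is_bimachine_left_bm[OF assms], rule left_bm_realizes)

lemma Right_f_realizes:
  assumes "is_bimachine B" and "realizes B f"
  shows "is_bimachine (Right_f f B)" and "realizes (Right_f f B) f"
proof -
  note mirrored = is_bimachine_mirror_bm[OF assms(1)] realizes_mirror_bm[OF assms]
  note left = Left_f_realizes[OF mirrored]
  show "is_bimachine (Right_f f B)"
    unfolding Right_f_def by (rule is_bimachine_mirror_bm[OF left(1)])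
  show "realizes (Right_f f B) f"
    using realizes_mirror_bm[OF left] by (simp add: Right_f_def)
qed

lemma minimal_bmI:
  assumes "is_bimachine M" and "realizes M f"
    and lft_M: "lft M = left_da f R" and "right_le R (rgt M)"
    and rgt_M: "rgt M = left_da (mirror_f f) L" and "left_le L (lft M)"
  shows "minimal_bm f M"
  unfolding minimal_bm_def
proof (intro conjI notI assms(1,2))
  assume "\<exists>B' :: (nat, nat, 'a) bimachine. is_bimachine B' \<and> realizes B' f \<and> bm_le M B' \<and> \<not> bm_le B' M"
  then obtain B' :: "(nat, nat, 'a) bimachine"
    where B': "is_bimachine B'" "realizes B' f" "left_le (lft M) (lft B')" "right_le (rgt M) (rgt B')"
      "\<not> bm_le B' M"
    unfolding bm_le_def by blast
  have "left_le (lft B') (lft M)"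
    unfolding lft_M by (rule left_le_left_da[OF B'(2) right_le_trans[OF assms(4) B'(4)]])
  moreover have "right_le (rgt B') (rgt M)"
    unfolding rgt_M by (rule right_le_left_da_mirror[OF B'(1,2) left_le_trans[OF assms(6) B'(3)]])
  ultimately show False using B'(5) by (simp add: bm_le_def)
qed

theorem proposition3p5:
  fixes B :: "('l, 'r, 'a) bimachine" and f :: "'a list \<Rightarrow> 'a list option"
  assumes "finite (UNIV :: 'a set)"
    and "is_bimachine B"
    and "realizes B f"
  shows "minimal_bm f (Left_f f (Right_f f B)) \<and> minimal_bm f (Right_f f (Left_f f B))
         \<and> bm_le B (Left_f f (Right_f f B)) \<and> bm_le B (Right_f f (Left_f f B))"
proof -
  note R = Right_f_realizes[OF assms(2,3)] and L = Left_f_realizes[OF assms(2,3)]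
  have left_L: "left_le (lft B) (left_da f (rgt B))"
    by (rule left_le_left_da[OF assms(3) right_le_refl])
  have right_R: "right_le (rgt B) (left_da (mirror_f f) (lft B))"
    by (rule right_le_left_da_mirror[OF assms(2,3) left_le_refl])
  have left_LR: "left_le (lft B) (left_da f (left_da (mirror_f f) (lft B)))"
    using left_le_left_da[OF R(2) right_le_refl] by simp
  have right_RL: "right_le (rgt B) (left_da (mirror_f f) (left_da f (rgt B)))"
    using right_le_left_da_mirror[OF L left_le_refl] by simp
  have "minimal_bm f (Left_f f (Right_f f B))"
    by (rule minimal_bmI[OF Left_f_realizes[OF R], where R = "left_da (mirror_f f) (lft B)"
          and L = "lft B"]) (simp_all add: left_LR)
  moreover have "minimal_bm f (Right_f f (Left_f f B))"
    by (rule minimal_bmI[OF Right_f_realizes[OF L], where R = "rgt B"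
          and L = "left_da f (rgt B)"]) (simp_all add: right_RL)
  ultimately show ?thesis
    using left_L right_R left_LR right_RL by (simp add: bm_le_def)
qed

end
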